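(* Let $k$ be a field, $\mathbf C$ a finite category, $\mathcal{A}$ a presheaf of $k$-algebras on $\mathbf C$ and $\mathcal{M}$ a presheaf of $\mathcal{A}$-bimodules. Then for every $q\in\mathbb N$ the cochain complex $(C^{*,q}(\mathcal{A},\mathcal{M}),d_{\mathrm{simp}})$ (Hochschild degree $q$ fixed, simplicial degree varying) is isomorphic to the Baues–Wirsching cochain complex $(C^*_{BW}(\mathbf C,\mathcal{C}^q_{\mathrm{HH}}(\mathcal{A},\mathcal{M})),\delta_{BW})$.
   Context: Presheaf of $k$-algebras: functor $\mathcal{A}\colon\mathbf C^{\mathrm{op}}\to\mathbf{Alg}_k$ (associative unital finite-dimensional). Presheaf of $\mathcal{A}$-bimodules: functor $\mathcal{M}$ on $\mathbf C^{\mathrm{op}}$ with each $\mathcal{M}(c)$ an $\mathcal{A}(c)$-bimodule and each $\mathcal{M}(d)\to\mathcal{M}(c)$ (for $c\to d$) an $\mathcal{A}(d)$-bimodule map. $C^q_{\mathrm{HH}}(B,N)=\mathrm{Hom}_k(B^{\otimes q},N)$. Gerstenhaber–Schack cochains: for strings $\sigma=(c_0\to\cdots\to c_p)$ of composable morphisms, $C^{p,q}(\mathcal{A},\mathcal{M})=\prod_\sigma C^q_{\mathrm{HH}}(\mathcal{A}(c_p),\mathcal{M}(c_0))$ and $(d_{\mathrm{simp}}\Gamma)^\sigma=T\circ\Gamma^{\partial_0\sigma}+\sum_{r=1}^{p-1}(-1)^r\Gamma^{\partial_r\sigma}+(-1)^p\Gamma^{\partial_p\sigma}\circ\phi^{\otimes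 q}$, where $\partial_r\sigma$ deletes $c_r$, $T\colon\mathcal{M}(c_1)\to\mathcal{M}(c_0)$ is induced by $c_0\to c_1$ and $\phi\colon\mathcal{A}(c_p)\to\mathcal{A}(c_{p-1})$ by $c_{p-1}\to c_p$. Twisted arrow category $\mathrm{Tw}\,\mathbf C$: objects morphisms $f\colon c\to d$; morphisms $f\to g$ ($g\colon c'\to d'$) are pairs $(\alpha\colon d\to d',\beta\colon c'\to c)$ with $g=\alpha f\beta$. A natural system is a functor $F\colon\mathrm{Tw}\,\mathbf C\to\mathbf{Ab}$; write $\alpha_*=F(\alpha,1)$, $\beta^*=F(1,\beta)$. Baues–Wirsching complex: $C^n_{BW}(\mathbf C,F)=\prod F(f_1\circ\cdots\circ f_n)$ over strings $c_n\xrightarrow{f_n}c_{n-1}\to\cdots\xrightarrow{f_1}c_0$, with $(\delta_{BW}\Gamma)(f_1,\dots,f_n)={f_1}_*\Gamma(f_2,\dots,f_n)+\sum_{i=1}^{n-1}(-1)^i\Gamma(f_1,\dots,f_if_{i+1},\dots,f_n)+(-1)^n f_n^*\Gamma(f_1,\dots,f_{n-1})$. The natural system $\mathcal{C}^q_{\mathrm{HH}}(\mathcal{A},\mathcal{M})$ sends $f\colon c\to d$ to $C^q_{\mathrm{HH}}(\mathcal{A}(d),\mathcal{M}(c))$ and $(\alpha,\beta)$ to $\Gamma\mapsto\mathcal{M}(\beta)\circ\Gamma\circ\mathcal{A}(\alpha)^{\otimes q}$. *)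

theory Defs
  imports "HOL-Algebra.Algebra"
begin

record ('o, 'm) cat =
  Ob  :: "'o set"
  Ar  :: "'m set"
  Dom :: "'m \<Rightarrow> 'o"
  Cod :: "'m \<Rightarrow> 'o"
  Idm :: "'o \<Rightarrow> 'm"
  Cmp :: "'m \<Rightarrow> 'm \<Rightarrow> 'm"   (* Cmp C g f = g \<circ> f, defined when Cod f = Dom g *)

definition category :: "('o, 'm) cat \<Rightarrow> bool" where
  "category C \<longleftrightarrow>
     (\<forall>f\<in>Ar C. Dom C f \<in> Ob C \<and> Cod C f \<in> Ob C) \<and>
     (\<forall>c\<in>Ob C. Idm C c \<in> Ar C \<and> Dom C (Idm C c) = c \<and> Cod C (Idm C c) = c) \<and>
     (\<forall>f\<in>Ar C. \<forall>g\<in>Ar C. Cod C f = Dom C g \<longrightarrow>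
        Cmp C g f \<in> Ar C \<and> Dom C (Cmp C g f) = Dom C f \<and> Cod C (Cmp C g f) = Cod C g) \<and>
     (\<forall>f\<in>Ar C. Cmp C f (Idm C (Dom C f)) = f \<and> Cmp C (Idm C (Cod C f)) f = f) \<and>
     (\<forall>f\<in>Ar C. \<forall>g\<in>Ar C. \<forall>h\<in>Ar C. Cod C f = Dom C g \<longrightarrow> Cod C g = Dom C h \<longrightarrow>
        Cmp C h (Cmp C g f) = Cmp C (Cmp C h g) f)"

definition finite_category :: "('o, 'm) cat \<Rightarrow> bool" where
  "finite_category C \<longleftrightarrow> category C \<and> finite (Ob C) \<and> finite (Ar C)"

definition fin_dim :: "'k ring \<Rightarrow> ('k, 'a) module \<Rightarrow> bool" where
  "fin_dim K V \<longleftrightarrow> (\<exists>S. finite S \<and> S \<subseteq> carrier V \<and>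
     (\<forall>x\<in>carrier V. \<exists>c \<in> S \<rightarrow> carrier K. x = finsum V (\<lambda>s. module.smult V (c s) s) S))"

definition k_linear :: "'k ring \<Rightarrow> ('k, 'a) module \<Rightarrow> ('k, 'b) module \<Rightarrow> ('a \<Rightarrow> 'b) \<Rightarrow> bool" where
  "k_linear K V W h \<longleftrightarrow> h \<in> carrier V \<rightarrow> carrier W \<and>
     (\<forall>x\<in>carrier V. \<forall>y\<in>carrier V. h (ring.add V x y) = ring.add W (h x) (h y)) \<and>
     (\<forall>a\<in>carrier K. \<forall>x\<in>carrier V. h (module.smult V a x) = module.smult W a (h x))"

definition k_algebra :: "'k ring \<Rightarrow> ('k, 'a) module \<Rightarrow> bool" where
  "k_algebra K A \<longleftrightarrow> ring A \<and> module K A \<and> fin_dim K A \<and>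
     (\<forall>a\<in>carrier K. \<forall>x\<in>carrier A. \<forall>y\<in>carrier A.
        monoid.mult A (module.smult A a x) y = module.smult A a (monoid.mult A x y) \<and>
        monoid.mult A x (module.smult A a y) = module.smult A a (monoid.mult A x y))"

definition k_alg_hom :: "'k ring \<Rightarrow> ('k, 'a) module \<Rightarrow> ('k, 'a) module \<Rightarrow> ('a \<Rightarrow> 'a) \<Rightarrow> bool" where
  "k_alg_hom K A B h \<longleftrightarrow> k_linear K A B h \<and> h \<in> ring_hom A B"

definition bimodule :: "'k ring \<Rightarrow> ('k, 'a) module \<Rightarrow> ('k, 'b) module \<Rightarrow>
    ('a \<Rightarrow> 'b \<Rightarrow> 'b) \<Rightarrow> ('b \<Rightarrow> 'a \<Rightarrow> 'b) \<Rightarrow> bool" where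
  "bimodule K A N l r \<longleftrightarrow> module K N \<and>
     (\<forall>x\<in>carrier A. \<forall>m\<in>carrier N. l x m \<in> carrier N \<and> r m x \<in> carrier N) \<and>
     (\<forall>x\<in>carrier A. \<forall>y\<in>carrier A. \<forall>m\<in>carrier N.
        l (ring.add A x y) m = ring.add N (l x m) (l y m) \<and>
        l (monoid.mult A x y) m = l x (l y m) \<and>
        r m (ring.add A x y) = ring.add N (r m x) (r m y) \<and>
        r m (monoid.mult A x y) = r (r m x) y \<and>
        r (l x m) y = l x (r m y)) \<and>
     (\<forall>x\<in>carrier A. \<forall>m\<in>carrier N. \<forall>n\<in>carrier N.
        l x (ring.add N m n) = ring.add N (l x m) (l x n) \<and>
        r (ring.add N m n) x = ring.add N (r m x) (r n x)) \<and>
     (\<forall>m\<in>carrier N. l (monoid.one A) m = m \<and> r m (monoid.one A) = m) \<and>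
     (\<forall>a\<in>carrier K. \<forall>x\<in>carrier A. \<forall>m\<in>carrier N.
        l (module.smult A a x) m = module.smult N a (l x m) \<and>
        l x (module.smult N a m) = module.smult N a (l x m) \<and>
        r m (module.smult A a x) = module.smult N a (r m x) \<and>
        r (module.smult N a m) x = module.smult N a (r m x))"

definition presheaf_alg :: "'k ring \<Rightarrow> ('o, 'm) cat \<Rightarrow> ('o \<Rightarrow> ('k, 'a) module) \<Rightarrow>
    ('m \<Rightarrow> 'a \<Rightarrow> 'a) \<Rightarrow> bool" where
  "presheaf_alg K C A Af \<longleftrightarrow>
     (\<forall>c\<in>Ob C. k_algebra K (A c)) \<and>
     (\<forall>f\<in>Ar C. k_alg_hom K (A (Cod C f)) (A (Dom C f)) (Af f)) \<and>
     (\<forall>c\<in>Ob C. \<forall>x\<in>carrier (A c). Af (Idm C c) x = x) \<and>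
     (\<forall>f\<in>Ar C. \<forall>g\<in>Ar C. Cod C f = Dom C g \<longrightarrow>
        (\<forall>x\<in>carrier (A (Cod C g)). Af (Cmp C g f) x = Af f (Af g x)))"

definition presheaf_bimod :: "'k ring \<Rightarrow> ('o, 'm) cat \<Rightarrow> ('o \<Rightarrow> ('k, 'a) module) \<Rightarrow>
    ('m \<Rightarrow> 'a \<Rightarrow> 'a) \<Rightarrow> ('o \<Rightarrow> ('k, 'b) module) \<Rightarrow> ('o \<Rightarrow> 'a \<Rightarrow> 'b \<Rightarrow> 'b) \<Rightarrow>
    ('o \<Rightarrow> 'b \<Rightarrow> 'a \<Rightarrow> 'b) \<Rightarrow> ('m \<Rightarrow> 'b \<Rightarrow> 'b) \<Rightarrow> bool" where
  "presheaf_bimod K C A Af M Ml Mr Mf \<longleftrightarrow>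
     (\<forall>c\<in>Ob C. bimodule K (A c) (M c) (Ml c) (Mr c)) \<and>
     (\<forall>f\<in>Ar C. k_linear K (M (Cod C f)) (M (Dom C f)) (Mf f) \<and>
        (\<forall>x\<in>carrier (A (Cod C f)). \<forall>m\<in>carrier (M (Cod C f)).
           Mf f (Ml (Cod C f) x m) = Ml (Dom C f) (Af f x) (Mf f m) \<and>
           Mf f (Mr (Cod C f) m x) = Mr (Dom C f) (Mf f m) (Af f x))) \<and>
     (\<forall>c\<in>Ob C. \<forall>m\<in>carrier (M c). Mf (Idm C c) m = m) \<and>
     (\<forall>f\<in>Ar C. \<forall>g\<in>Ar C. Cod C f = Dom C g \<longrightarrow>
        (\<forall>m\<in>carrier (M (Cod C g)). Mf (Cmp C g f) m = Mf f (Mf g m)))"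

text \<open>C^q_HH(B,N) = Hom_k(B^{\<otimes>q}, N), represented (via the universal property of the
  tensor power) as K-multilinear maps on q-tuples (lists of length q), extensional.\<close>
definition valid_args :: "('k, 'a) module \<Rightarrow> nat \<Rightarrow> 'a list \<Rightarrow> bool" where
  "valid_args B q xs \<longleftrightarrow> length xs = q \<and> set xs \<subseteq> carrier B"

definition HH :: "'k ring \<Rightarrow> ('k, 'a) module \<Rightarrow> ('k, 'b) module \<Rightarrow> nat \<Rightarrow> ('a list \<Rightarrow> 'b) set" where
  "HH K B N q = {\<Gamma>.
     (\<forall>xs. valid_args B q xs \<longrightarrow> \<Gamma> xs \<in> carrier N) \<and>
     (\<forall>xs. \<not> valid_args B q xs \<longrightarrow> \<Gamma> xs = undefined) \<and>
     (\<forall>xs i y. valid_args B q xs \<longrightarrow> i < q \<longrightarrow> y \<in> carrier B \<longrightarrow>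
        \<Gamma> (xs[i := ring.add B (xs ! i) y]) = ring.add N (\<Gamma> xs) (\<Gamma> (xs[i := y]))) \<and>
     (\<forall>xs i a. valid_args B q xs \<longrightarrow> i < q \<longrightarrow> a \<in> carrier K \<longrightarrow>
        \<Gamma> (xs[i := module.smult B a (xs ! i)]) = module.smult N a (\<Gamma> xs))}"

text \<open>The abelian group structure (written multiplicatively, HOL-Algebra monoid record).\<close>
definition HH_grp :: "'k ring \<Rightarrow> ('k, 'a) module \<Rightarrow> ('k, 'b) module \<Rightarrow> nat \<Rightarrow> ('a list \<Rightarrow> 'b) monoid" where
  "HH_grp K B N q = \<lparr>carrier = HH K B N q,
     monoid.mult = (\<lambda>\<Gamma> \<Gamma>'. \<lambda>xs. if valid_args B q xs then ring.add N (\<Gamma> xs) (\<Gamma>' xs) else undefined),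
     monoid.one = (\<lambda>xs. if valid_args B q xs then ring.zero N else undefined)\<rparr>"

section \<open>Natural systems and the Baues--Wirsching complex\<close>

text \<open>A natural system on C with values in abelian groups: NF f is the group F(f);
  lower \<alpha> f = \<alpha>_* : F(f) \<rightarrow> F(\<alpha> f),  upper \<beta> f = \<beta>^* : F(f) \<rightarrow> F(f \<beta>).\<close>
record ('m, 'x) natsys =
  NF    :: "'m \<Rightarrow> 'x monoid"
  lower :: "'m \<Rightarrow> 'm \<Rightarrow> 'x \<Rightarrow> 'x"
  upper :: "'m \<Rightarrow> 'm \<Rightarrow> 'x \<Rightarrow> 'x"

text \<open>Strings c_n --f_n--> ... --f_1--> c_0, represented as (c_0, [f_1, ..., f_n]).\<close>
definition bw_strings :: "('o, 'm) cat \<Rightarrow> nat \<Rightarrow> ('o \<times> 'm list) set" where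
  "bw_strings C n = {(c, fs). c \<in> Ob C \<and> length fs = n \<and> set fs \<subseteq> Ar C \<and>
     (fs \<noteq> [] \<longrightarrow> Cod C (hd fs) = c) \<and>
     (\<forall>i. Suc i < n \<longrightarrow> Dom C (fs ! i) = Cod C (fs ! Suc i))}"

fun cmp_list :: "('o, 'm) cat \<Rightarrow> 'o \<Rightarrow> 'm list \<Rightarrow> 'm" where
  "cmp_list C c [] = Idm C c"
| "cmp_list C c [f] = f"
| "cmp_list C c (f # g # fs) = Cmp C f (cmp_list C (Dom C f) (g # fs))"

text \<open>Replace f_i, f_{i+1} by f_i \<circ> f_{i+1} (i is 1-based).\<close>
definition bw_merge :: "('o, 'm) cat \<Rightarrow> nat \<Rightarrow> 'm list \<Rightarrow> 'm list" where
  "bw_merge C i fs = take (i - 1) fs @ [Cmp C (fs ! (i - 1)) (fs ! i)] @ drop (i + 1) fs"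

definition grp_sign :: "'x monoid \<Rightarrow> nat \<Rightarrow> 'x \<Rightarrow> 'x" where
  "grp_sign G i x = (if even i then x else inv\<^bsub>G\<^esub> x)"

definition bw_grp :: "('o, 'm) cat \<Rightarrow> ('m, 'x) natsys \<Rightarrow> nat \<Rightarrow> ('o \<times> 'm list \<Rightarrow> 'x) monoid" where
  "bw_grp C F n = \<lparr>carrier = (\<Pi>\<^sub>E \<sigma>\<in>bw_strings C n. carrier (NF F (cmp_list C (fst \<sigma>) (snd \<sigma>)))),
     monoid.mult = (\<lambda>\<Gamma> \<Gamma>'. \<lambda>\<sigma>. if \<sigma> \<in> bw_strings C n
               then monoid.mult (NF F (cmp_list C (fst \<sigma>) (snd \<sigma>))) (\<Gamma> \<sigma>) (\<Gamma>' \<sigma>) else undefined),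
     monoid.one = (\<lambda>\<sigma>. if \<sigma> \<in> bw_strings C n then monoid.one (NF F (cmp_list C (fst \<sigma>) (snd \<sigma>))) else undefined)\<rparr>"

definition bw_diff :: "('o, 'm) cat \<Rightarrow> ('m, 'x) natsys \<Rightarrow> nat \<Rightarrow> ('o \<times> 'm list \<Rightarrow> 'x) \<Rightarrow> ('o \<times> 'm list \<Rightarrow> 'x)" where
  "bw_diff C F n \<Gamma> = (\<lambda>\<sigma>. if \<sigma> \<in> bw_strings C (Suc n) then
     (let c = fst \<sigma>; fs = snd \<sigma>; G = NF F (cmp_list C c fs) in
        monoid.mult G
          (monoid.mult G
            (lower F (hd fs) (cmp_list C (Dom C (hd fs)) (tl fs)) (\<Gamma> (Dom C (hd fs), tl fs)))
            (finprod G (\<lambda>i. grp_sign G i (\<Gamma> (c, bw_merge C i fs))) {1..n}))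
          (grp_sign G (Suc n) (upper F (last fs) (cmp_list C c (butlast fs)) (\<Gamma> (c, butlast fs)))))
     else undefined)"

definition HH_natsys :: "'k ring \<Rightarrow> ('o, 'm) cat \<Rightarrow> ('o \<Rightarrow> ('k, 'a) module) \<Rightarrow> ('m \<Rightarrow> 'a \<Rightarrow> 'a) \<Rightarrow>
    ('o \<Rightarrow> ('k, 'b) module) \<Rightarrow> ('m \<Rightarrow> 'b \<Rightarrow> 'b) \<Rightarrow> nat \<Rightarrow> ('m, 'a list \<Rightarrow> 'b) natsys" where
  "HH_natsys K C A Af M Mf q = \<lparr>
     NF = (\<lambda>f. HH_grp K (A (Cod C f)) (M (Dom C f)) q),
     lower = (\<lambda>\<alpha> f \<Gamma>. \<lambda>xs. if valid_args (A (Cod C \<alpha>)) q xs then \<Gamma> (map (Af \<alpha>) xs) else undefined),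
     upper = (\<lambda>\<beta> f \<Gamma>. \<lambda>xs. if valid_args (A (Cod C f)) q xs then Mf \<beta> (\<Gamma> xs) else undefined)\<rparr>"

section \<open>Gerstenhaber--Schack cochains with fixed Hochschild degree q\<close>

text \<open>Strings c_0 --g_1--> c_1 --> ... --g_p--> c_p, represented as (c_0, [g_1, ..., g_p]).\<close>
definition gs_strings :: "('o, 'm) cat \<Rightarrow> nat \<Rightarrow> ('o \<times> 'm list) set" where
  "gs_strings C p = {(c, gs). c \<in> Ob C \<and> length gs = p \<and> set gs \<subseteq> Ar C \<and>
     (gs \<noteq> [] \<longrightarrow> Dom C (hd gs) = c) \<and>
     (\<forall>i. Suc i < p \<longrightarrow> Cod C (gs ! i) = Dom C (gs ! Suc i))}"

definition gs_end :: "('o, 'm) cat \<Rightarrow> 'o \<times> 'm list \<Rightarrow> 'o" where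
  "gs_end C \<sigma> = (if snd \<sigma> = [] then fst \<sigma> else Cod C (last (snd \<sigma>)))"

text \<open>Delete c_r (0 < r < length): replace g_r, g_{r+1} by g_{r+1} \<circ> g_r.\<close>
definition gs_merge :: "('o, 'm) cat \<Rightarrow> nat \<Rightarrow> 'm list \<Rightarrow> 'm list" where
  "gs_merge C r gs = take (r - 1) gs @ [Cmp C (gs ! r) (gs ! (r - 1))] @ drop (r + 1) gs"

definition mod_sign :: "('k, 'b) module \<Rightarrow> nat \<Rightarrow> 'b \<Rightarrow> 'b" where
  "mod_sign N i x = (if even i then x else a_inv N x)"

definition gs_grp :: "'k ring \<Rightarrow> ('o, 'm) cat \<Rightarrow> ('o \<Rightarrow> ('k, 'a) module) \<Rightarrow>
    ('o \<Rightarrow> ('k, 'b) module) \<Rightarrow> nat \<Rightarrow> nat \<Rightarrow> ('o \<times> 'm list \<Rightarrow> 'a list \<Rightarrow> 'b) monoid" where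
  "gs_grp K C A M q p = \<lparr>carrier = (\<Pi>\<^sub>E \<sigma>\<in>gs_strings C p. HH K (A (gs_end C \<sigma>)) (M (fst \<sigma>)) q),
     monoid.mult = (\<lambda>\<Gamma> \<Gamma>'. \<lambda>\<sigma>. if \<sigma> \<in> gs_strings C p
               then monoid.mult (HH_grp K (A (gs_end C \<sigma>)) (M (fst \<sigma>)) q) (\<Gamma> \<sigma>) (\<Gamma>' \<sigma>) else undefined),
     monoid.one = (\<lambda>\<sigma>. if \<sigma> \<in> gs_strings C p then monoid.one (HH_grp K (A (gs_end C \<sigma>)) (M (fst \<sigma>)) q) else undefined)\<rparr>"

text \<open>d_simp : C^{p,q} \<rightarrow> C^{p+1,q}; for sigma with P = p+1 arrows,
  (d \<Gamma>)^sigma = T \<circ> \<Gamma>^{d_0 sigma} + sum_{r=1}^{P-1} (-1)^r \<Gamma>^{d_r sigma} + (-1)^P \<Gamma>^{d_P sigma} \<circ> phi^{\<otimes>q}.\<close>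
definition gs_diff :: "'k ring \<Rightarrow> ('o, 'm) cat \<Rightarrow> ('o \<Rightarrow> ('k, 'a) module) \<Rightarrow> ('m \<Rightarrow> 'a \<Rightarrow> 'a) \<Rightarrow>
    ('o \<Rightarrow> ('k, 'b) module) \<Rightarrow> ('m \<Rightarrow> 'b \<Rightarrow> 'b) \<Rightarrow> nat \<Rightarrow> nat \<Rightarrow>
    ('o \<times> 'm list \<Rightarrow> 'a list \<Rightarrow> 'b) \<Rightarrow> ('o \<times> 'm list \<Rightarrow> 'a list \<Rightarrow> 'b)" where
  "gs_diff K C A Af M Mf q p \<Gamma> = (\<lambda>\<sigma>. if \<sigma> \<in> gs_strings C (Suc p) then
     (let c = fst \<sigma>; gs = snd \<sigma>; N = M c in
      (\<lambda>xs. if valid_args (A (gs_end C \<sigma>)) q xs then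
         ring.add N
           (ring.add N
             (Mf (hd gs) (\<Gamma> (Cod C (hd gs), tl gs) xs))
             (finsum N (\<lambda>r. mod_sign N r (\<Gamma> (c, gs_merge C r gs) xs)) {1..p}))
           (mod_sign N (Suc p) (\<Gamma> (c, butlast gs) (map (Af (last gs)) xs)))
       else undefined))
     else undefined)"

definition cochain_iso :: "(nat \<Rightarrow> 'x monoid) \<Rightarrow> (nat \<Rightarrow> 'x \<Rightarrow> 'x) \<Rightarrow>
    (nat \<Rightarrow> 'y monoid) \<Rightarrow> (nat \<Rightarrow> 'y \<Rightarrow> 'y) \<Rightarrow> (nat \<Rightarrow> 'x \<Rightarrow> 'y) \<Rightarrow> bool" where
  "cochain_iso G d H e \<Phi> \<longleftrightarrow>
     (\<forall>n. \<Phi> n \<in> iso (G n) (H n) \<and> (\<forall>x\<in>carrier (G n). \<Phi> (Suc n) (d n x) = e n (\<Phi> n x)))"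

definition complexes_isomorphic :: "(nat \<Rightarrow> 'x monoid) \<Rightarrow> (nat \<Rightarrow> 'x \<Rightarrow> 'x) \<Rightarrow>
    (nat \<Rightarrow> 'y monoid) \<Rightarrow> (nat \<Rightarrow> 'y \<Rightarrow> 'y) \<Rightarrow> bool" where
  "complexes_isomorphic G d H e \<longleftrightarrow> (\<exists>\<Phi>. cochain_iso G d H e \<Phi>)"

end

theory Submission
  imports Defs
begin

(*
  Reversing a string identifies the Gerstenhaber-Schack strings c_0 -> ... -> c_p with the
  Baues-Wirsching strings of the same length; the composite of such a string is an arrow
  c_0 -> c_p, whose coefficient group C^q_HH(A(c_p), M(c_0)) is exactly the coefficient of the
  string in C^{p,q}. Under this reindexing the face T o Gamma^(d_0 sigma) of d_simp becomes the
  face beta^* of delta_BW, the face Gamma^(d_p sigma) o phi^(tensor q) becomes alpha_*, and the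
  inner face r becomes the inner face p + 1 - r. Comparing signs, reversal turns d_simp on
  C^{p,q} into (-1)^(p+1) delta_BW, so reversal twisted by (-1)^(p(p+1)/2) in degree p is an
  isomorphism of cochain complexes. It is bijective on strings and acts pointwise by signs,
  hence is a group isomorphism in every degree.
*)

lemma mod_sign_closed: "abelian_group N \<Longrightarrow> x \<in> carrier N \<Longrightarrow> mod_sign N k x \<in> carrier N"
  by (simp add: mod_sign_def abelian_group.a_inv_closed)

lemma mod_sign_add:
  "abelian_group N \<Longrightarrow> x \<in> carrier N \<Longrightarrow> y \<in> carrier N \<Longrightarrow>
   mod_sign N k (x \<oplus>\<^bsub>N\<^esub> y) = mod_sign N k x \<oplus>\<^bsub>N\<^esub> mod_sign N k y"
  by (simp add: mod_sign_def abelian_group.minus_add)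

lemma mod_sign_mod_sign:
  "abelian_group N \<Longrightarrow> x \<in> carrier N \<Longrightarrow> mod_sign N a (mod_sign N b x) = mod_sign N (a + b) x"
  by (simp add: mod_sign_def abelian_group.minus_minus)

lemma mod_sign_twice: "abelian_group N \<Longrightarrow> x \<in> carrier N \<Longrightarrow> mod_sign N k (mod_sign N k x) = x"
  by (simp add: mod_sign_def abelian_group.minus_minus)

lemma mod_sign_cong_parity: "even a = even b \<Longrightarrow> mod_sign N a x = mod_sign N b x"
  by (simp add: mod_sign_def)

lemma k_linear_mod_sign:
  assumes "module K N"
  shows "k_linear K N N (mod_sign N k)"
proof -
  interpret N: module K N by fact
  show ?thesis
    by (auto simp: k_linear_def mod_sign_def N.minus_add N.smult_r_minus)
qed

lemma k_linear_abelian_group_hom: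
  assumes "module K N1" and "module K N2" and "k_linear K N1 N2 h"
  shows "abelian_group_hom N1 N2 h"
proof -
  interpret N1: module K N1 by fact
  interpret N2: module K N2 by fact
  show ?thesis
    using assms(3)
    by (intro abelian_group_homI N1.abelian_group_axioms N2.abelian_group_axioms group_hom.intro
        group_hom_axioms.intro N1.a_group N2.a_group) (auto simp: k_linear_def hom_def)
qed

lemma k_linear_mod_sign_commute:
  assumes "module K N1" and "module K N2" and "k_linear K N1 N2 h" and "x \<in> carrier N1"
  shows "h (mod_sign N1 k x) = mod_sign N2 k (h x)"
  using abelian_group_hom.hom_a_inv[OF k_linear_abelian_group_hom[OF assms(1-3)] assms(4)]
  by (simp add: mod_sign_def)

lemma finsum_mod_sign:
  assumes "abelian_group N" and "finite I" and "f \<in> I \<rightarrow> carrier N"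
  shows "mod_sign N k (finsum N f I) = finsum N (\<lambda>i. mod_sign N k (f i)) I"
proof -
  interpret N: abelian_group N by fact
  show ?thesis
    using assms(2,3)
  proof (induction I rule: finite_induct)
    case empty
    then show ?case by (simp add: mod_sign_def)
  next
    case (insert a I)
    then have "f a \<in> carrier N" "f \<in> I \<rightarrow> carrier N" "(\<lambda>i. mod_sign N k (f i)) \<in> I \<rightarrow> carrier N"
      using mod_sign_closed[OF assms(1)] by auto
    with insert show ?case
      by (simp add: N.finsum_insert mod_sign_add[OF assms(1)] mod_sign_closed[OF assms(1)])
  qed
qed

lemma finsum_reflect:
  assumes "abelian_monoid N" and "f \<in> {1..n} \<rightarrow> carrier N"
  shows "finsum N f {1..n} = finsum N (\<lambda>i. f (Suc n - i)) {1..n}"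
proof -
  have "r \<in> (\<lambda>i. Suc n - i) ` {1..n}" if "r \<in> {1..n}" for r
    using that by (intro image_eqI[of r _ "Suc n - r"]) auto
  then have "{1..n} = (\<lambda>i. Suc n - i) ` {1..n}"
    by auto
  moreover have "inj_on (\<lambda>i. Suc n - i) {1..n}"
    by (auto simp: inj_on_def)
  ultimately show ?thesis
    using assms abelian_monoid.finsum_reindex[OF assms(1), of f "\<lambda>i. Suc n - i" "{1..n}"] by simp
qed

(* x, y (n + 1 - r), z are the faces of d_simp in order; delta_BW meets them as z, y i, x. *)
lemma mod_sign_reversed_coboundary:
  assumes N: "abelian_group N" and x: "x \<in> carrier N" and z: "z \<in> carrier N"
    and y: "\<And>i. i \<in> {1..n} \<Longrightarrow> y i \<in> carrier N"
  shows "mod_sign N (t + Suc n)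
      ((x \<oplus>\<^bsub>N\<^esub> (\<Oplus>\<^bsub>N\<^esub>r\<in>{1..n}. mod_sign N r (y (Suc n - r)))) \<oplus>\<^bsub>N\<^esub> mod_sign N (Suc n) z)
    = (mod_sign N t z \<oplus>\<^bsub>N\<^esub> (\<Oplus>\<^bsub>N\<^esub>i\<in>{1..n}. mod_sign N i (mod_sign N t (y i))))
      \<oplus>\<^bsub>N\<^esub> mod_sign N (Suc n) (mod_sign N t x)"
proof -
  interpret N: abelian_group N by fact
  have y': "(\<lambda>r. mod_sign N r (y (Suc n - r))) \<in> {1..n} \<rightarrow> carrier N"
    by (intro Pi_I mod_sign_closed[OF N] y) auto
  have signed_y: "(\<lambda>i. mod_sign N k (y i)) \<in> {1..n} \<rightarrow> carrier N" for k
    using y mod_sign_closed[OF N] by auto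
  have "mod_sign N (t + Suc n) (\<Oplus>\<^bsub>N\<^esub>r\<in>{1..n}. mod_sign N r (y (Suc n - r)))
      = mod_sign N (t + Suc n) (\<Oplus>\<^bsub>N\<^esub>i\<in>{1..n}. mod_sign N (Suc n - i) (y i))"
    unfolding finsum_reflect[OF N.abelian_monoid_axioms y']
    by (intro arg_cong[where f = "mod_sign N _"] N.finsum_cong' refl) (auto intro!: mod_sign_closed[OF N] y)
  also have "\<dots> = (\<Oplus>\<^bsub>N\<^esub>i\<in>{1..n}. mod_sign N (t + Suc n) (mod_sign N (Suc n - i) (y i)))"
    by (rule finsum_mod_sign[OF N finite_atLeastAtMost]) (use signed_y in auto)
  also have "\<dots> = (\<Oplus>\<^bsub>N\<^esub>i\<in>{1..n}. mod_sign N i (mod_sign N t (y i)))"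
  proof (rule N.finsum_cong'[OF refl])
    show "(\<lambda>i. mod_sign N i (mod_sign N t (y i))) \<in> {1..n} \<rightarrow> carrier N"
      using y mod_sign_closed[OF N] by auto
  next
    fix i assume i: "i \<in> {1..n}"
    then have "even (t + Suc n + (Suc n - i)) = even (i + t)" by auto
    then show "mod_sign N (t + Suc n) (mod_sign N (Suc n - i) (y i)) = mod_sign N i (mod_sign N t (y i))"
      unfolding mod_sign_mod_sign[OF N y[OF i]] by (rule mod_sign_cong_parity)
  qed
  finally have sum: "mod_sign N (t + Suc n) (\<Oplus>\<^bsub>N\<^esub>r\<in>{1..n}. mod_sign N r (y (Suc n - r)))
      = (\<Oplus>\<^bsub>N\<^esub>i\<in>{1..n}. mod_sign N i (mod_sign N t (y i)))" .
  have "mod_sign N (t + Suc n) x = mod_sign N (Suc n) (mod_sign N t x)"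
    and "mod_sign N (t + Suc n) (mod_sign N (Suc n) z) = mod_sign N t z"
    unfolding mod_sign_mod_sign[OF N x] mod_sign_mod_sign[OF N z] by (simp_all add: mod_sign_def)
  moreover have "(\<Oplus>\<^bsub>N\<^esub>i\<in>{1..n}. mod_sign N i (mod_sign N t (y i))) \<in> carrier N"
    using y by (intro N.finsum_closed) (auto intro!: mod_sign_closed[OF N])
  ultimately show ?thesis
    using sum x z y'
    by (simp add: mod_sign_add[OF N] mod_sign_closed[OF N] N.finsum_closed N.a_ac)
qed

section \<open>Hochschild cochain groups\<close>

lemma valid_args_update:
  "valid_args B q xs \<Longrightarrow> y \<in> carrier B \<Longrightarrow> valid_args B q (xs[i := y])"
  unfolding valid_args_def by (metis length_list_update set_update_subset_insert insert_subset subset_trans)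

lemma valid_args_nth: "valid_args B q xs \<Longrightarrow> i < q \<Longrightarrow> xs ! i \<in> carrier B"
  unfolding valid_args_def by auto

lemma HH_closed: "g \<in> HH K B N q \<Longrightarrow> valid_args B q xs \<Longrightarrow> g xs \<in> carrier N"
  unfolding HH_def by auto

lemma HH_undefined: "g \<in> HH K B N q \<Longrightarrow> \<not> valid_args B q xs \<Longrightarrow> g xs = undefined"
  unfolding HH_def by auto

definition hh_comp :: "('k, 'a) module \<Rightarrow> nat \<Rightarrow> ('b \<Rightarrow> 'c) \<Rightarrow> ('a list \<Rightarrow> 'b) \<Rightarrow> 'a list \<Rightarrow> 'c" where
  "hh_comp B q h g = (\<lambda>xs. if valid_args B q xs then h (g xs) else undefined)"

lemma HH_hh_comp:
  assumes "module K B" and "module K N1" and "module K N2"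
    and h: "k_linear K N1 N2 h" and g: "g \<in> HH K B N1 q"
  shows "hh_comp B q h g \<in> HH K B N2 q"
proof -
  interpret B: module K B by fact
  have "h \<in> carrier N1 \<rightarrow> carrier N2" using h by (simp add: k_linear_def)
  then show ?thesis
    using g h unfolding HH_def hh_comp_def k_linear_def
    by (auto simp: valid_args_update valid_args_nth)
qed

lemma HH_grp_carrier [simp]: "carrier (HH_grp K B N q) = HH K B N q"
  by (simp add: HH_grp_def)

lemma HH_grp_mult:
  "g \<otimes>\<^bsub>HH_grp K B N q\<^esub> g' = (\<lambda>xs. if valid_args B q xs then g xs \<oplus>\<^bsub>N\<^esub> g' xs else undefined)"
  by (simp add: HH_grp_def)

lemma HH_add:
  assumes "module K B" and "module K N" and g: "g \<in> HH K B N q" and g': "g' \<in> HH K B N q"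
  shows "g \<otimes>\<^bsub>HH_grp K B N q\<^esub> g' \<in> HH K B N q"
proof -
  interpret B: module K B by fact
  interpret N: module K N by fact
  show ?thesis
    using g g' unfolding HH_def HH_grp_def
    by (auto simp: valid_args_update valid_args_nth N.a_ac N.smult_r_distr)
qed

lemma HH_zero:
  assumes "module K B" and "module K N"
  shows "\<one>\<^bsub>HH_grp K B N q\<^esub> \<in> HH K B N q"
proof -
  interpret B: module K B by fact
  interpret N: module K N by fact
  show ?thesis
    unfolding HH_def HH_grp_def by (auto simp: valid_args_update valid_args_nth)
qed

lemma hh_comp_hh_comp: "hh_comp B q h (hh_comp B q h' g) = hh_comp B q (\<lambda>x. h (h' x)) g"
  by (simp add: hh_comp_def fun_eq_iff)

lemma hh_comp_id:
  "g \<in> HH K B N q \<Longrightarrow> (\<And>x. x \<in> carrier N \<Longrightarrow> h x = x) \<Longrightarrow> hh_comp B q h g = g"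
  by (auto simp: hh_comp_def fun_eq_iff HH_closed HH_undefined)

lemma HH_grp_comm_group:
  assumes B: "module K B" and N: "module K N"
  shows "comm_group (HH_grp K B N q)"
proof -
  interpret N: module K N by fact
  have neg: "hh_comp B q (mod_sign N 1) g \<in> HH K B N q" if "g \<in> HH K B N q" for g
    using HH_hh_comp[OF B N N k_linear_mod_sign[OF N] that] .
  show ?thesis
  proof (rule comm_groupI)
    fix g g' assume "g \<in> carrier (HH_grp K B N q)" "g' \<in> carrier (HH_grp K B N q)"
    then show "g \<otimes>\<^bsub>HH_grp K B N q\<^esub> g' \<in> carrier (HH_grp K B N q)"
      using HH_add[OF B N] by (simp add: HH_grp_def)
  next
    show "\<one>\<^bsub>HH_grp K B N q\<^esub> \<in> carrier (HH_grp K B N q)"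
      using HH_zero[OF B N] by (simp add: HH_grp_def)
  next
    fix g g' g'' assume "g \<in> carrier (HH_grp K B N q)" "g' \<in> carrier (HH_grp K B N q)"
      "g'' \<in> carrier (HH_grp K B N q)"
    then show "g \<otimes>\<^bsub>HH_grp K B N q\<^esub> g' \<otimes>\<^bsub>HH_grp K B N q\<^esub> g'' =
        g \<otimes>\<^bsub>HH_grp K B N q\<^esub> (g' \<otimes>\<^bsub>HH_grp K B N q\<^esub> g'')"
      by (simp add: HH_grp_def fun_eq_iff HH_closed N.a_assoc)
  next
    fix g g' assume "g \<in> carrier (HH_grp K B N q)" "g' \<in> carrier (HH_grp K B N q)"
    then show "g \<otimes>\<^bsub>HH_grp K B N q\<^esub> g' = g' \<otimes>\<^bsub>HH_grp K B N q\<^esub> g"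
      by (simp add: HH_grp_def fun_eq_iff HH_closed N.a_comm)
  next
    fix g assume "g \<in> carrier (HH_grp K B N q)"
    then show "\<one>\<^bsub>HH_grp K B N q\<^esub> \<otimes>\<^bsub>HH_grp K B N q\<^esub> g = g"
      by (simp add: HH_grp_def fun_eq_iff HH_closed HH_undefined)
  next
    fix g assume g: "g \<in> carrier (HH_grp K B N q)"
    then have "hh_comp B q (mod_sign N 1) g \<otimes>\<^bsub>HH_grp K B N q\<^esub> g = \<one>\<^bsub>HH_grp K B N q\<^esub>"
      by (simp add: HH_grp_def hh_comp_def mod_sign_def fun_eq_iff HH_closed N.l_neg)
    with g neg show "\<exists>g'\<in>carrier (HH_grp K B N q). g' \<otimes>\<^bsub>HH_grp K B N q\<^esub> g = \<one>\<^bsub>HH_grp K B N q\<^esub>"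
      by (auto simp: HH_grp_def)
  qed
qed

lemma HH_grp_sign:
  assumes B: "module K B" and N: "module K N" and g: "g \<in> HH K B N q"
  shows "grp_sign (HH_grp K B N q) k g = hh_comp B q (mod_sign N k) g"
proof (cases "even k")
  case True
  then show ?thesis using hh_comp_id[OF g] by (simp add: grp_sign_def mod_sign_def)
next
  case False
  interpret G: comm_group "HH_grp K B N q" using HH_grp_comm_group[OF B N] .
  interpret N: module K N by fact
  have "inv\<^bsub>HH_grp K B N q\<^esub> g = hh_comp B q (mod_sign N k) g"
  proof (rule G.inv_equality)
    show "hh_comp B q (mod_sign N k) g \<otimes>\<^bsub>HH_grp K B N q\<^esub> g = \<one>\<^bsub>HH_grp K B N q\<^esub>"
      using g False by (simp add: HH_grp_def hh_comp_def mod_sign_def fun_eq_iff HH_closed N.l_neg)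
    show "hh_comp B q (mod_sign N k) g \<in> carrier (HH_grp K B N q)"
      using HH_hh_comp[OF B N N k_linear_mod_sign[OF N] g] by (simp add: HH_grp_def)
  qed (use g in \<open>simp add: HH_grp_def\<close>)
  with False show ?thesis by (simp add: grp_sign_def)
qed

lemma HH_grp_finprod:
  assumes B: "module K B" and N: "module K N" and I: "finite I" and f: "f \<in> I \<rightarrow> HH K B N q"
  shows "finprod (HH_grp K B N q) f I =
    (\<lambda>xs. if valid_args B q xs then \<Oplus>\<^bsub>N\<^esub>i\<in>I. f i xs else undefined)"
  using I f
proof (induction I rule: finite_induct)
  case empty
  interpret G: comm_group "HH_grp K B N q" using HH_grp_comm_group[OF B N] .
  interpret N: module K N by fact
  have "finprod (HH_grp K B N q) f {} = \<one>\<^bsub>HH_grp K B N q\<^esub>" by simp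
  then show ?case by (simp add: HH_grp_def fun_eq_iff)
next
  case (insert a I)
  interpret G: comm_group "HH_grp K B N q" using HH_grp_comm_group[OF B N] .
  interpret N: module K N by fact
  have fa: "f a \<in> HH K B N q" and fI: "f \<in> I \<rightarrow> HH K B N q" using insert.prems by auto
  have "(\<lambda>i. f i xs) \<in> I \<rightarrow> carrier N" if "valid_args B q xs" for xs
    using fI that HH_closed by fast
  moreover have "finprod (HH_grp K B N q) f (insert a I) =
      f a \<otimes>\<^bsub>HH_grp K B N q\<^esub> finprod (HH_grp K B N q) f I"
    by (rule G.finprod_insert) (use insert fa fI in \<open>simp_all add: HH_grp_def\<close>)
  ultimately show ?case
    using insert fa fI by (simp add: HH_grp_def fun_eq_iff HH_closed N.finsum_insert)
qed

lemma HH_grp_finprod_sign_apply: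
  assumes B: "module K B" and N: "module K N" and I: "finite I"
    and g: "\<And>i. i \<in> I \<Longrightarrow> g i \<in> HH K B N q" and xs: "valid_args B q xs"
  shows "finprod (HH_grp K B N q) (\<lambda>i. grp_sign (HH_grp K B N q) i (g i)) I xs =
    (\<Oplus>\<^bsub>N\<^esub>i\<in>I. mod_sign N i (g i xs))"
proof -
  interpret H: comm_group "HH_grp K B N q" using HH_grp_comm_group[OF B N] .
  have signed: "hh_comp B q (mod_sign N i) (g i) \<in> HH K B N q" if "i \<in> I" for i
    by (rule HH_hh_comp[OF B N N k_linear_mod_sign[OF N] g[OF that]])
  have "finprod (HH_grp K B N q) (\<lambda>i. grp_sign (HH_grp K B N q) i (g i)) I =
      finprod (HH_grp K B N q) (\<lambda>i. hh_comp B q (mod_sign N i) (g i)) I"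
    by (intro H.finprod_cong') (simp_all add: HH_grp_sign[OF B N] g signed)
  also have "\<dots> = (\<lambda>xs. if valid_args B q xs then \<Oplus>\<^bsub>N\<^esub>i\<in>I. hh_comp B q (mod_sign N i) (g i) xs else undefined)"
    by (rule HH_grp_finprod[OF B N I]) (use signed in auto)
  finally show ?thesis
    using xs by (simp add: hh_comp_def)
qed

section \<open>Strings and their reversal\<close>

lemma category_Dom_Ob: "category C \<Longrightarrow> f \<in> Ar C \<Longrightarrow> Dom C f \<in> Ob C"
  and category_Cod_Ob: "category C \<Longrightarrow> f \<in> Ar C \<Longrightarrow> Cod C f \<in> Ob C"
  unfolding category_def by auto

lemma category_Cmp:
  "category C \<Longrightarrow> f \<in> Ar C \<Longrightarrow> g \<in> Ar C \<Longrightarrow> Cod C f = Dom C g \<Longrightarrow>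
   Cmp C g f \<in> Ar C \<and> Dom C (Cmp C g f) = Dom C f \<and> Cod C (Cmp C g f) = Cod C g"
  unfolding category_def by auto

lemma category_Idm:
  "category C \<Longrightarrow> c \<in> Ob C \<Longrightarrow> Idm C c \<in> Ar C \<and> Dom C (Idm C c) = c \<and> Cod C (Idm C c) = c"
  unfolding category_def by auto

definition bw_source :: "('o, 'm) cat \<Rightarrow> 'o \<Rightarrow> 'm list \<Rightarrow> 'o" where
  "bw_source C d fs = (if fs = [] then d else Dom C (last fs))"

lemma bw_strings_conv:
  "(d, fs) \<in> bw_strings C n \<longleftrightarrow> d \<in> Ob C \<and> length fs = n \<and> set fs \<subseteq> Ar C \<and>
     (fs \<noteq> [] \<longrightarrow> Cod C (hd fs) = d) \<and> successively (\<lambda>f g. Dom C f = Cod C g) fs"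
  by (auto simp: bw_strings_def successively_conv_nth)

(* The adjacency condition is oriented so that successively_rev turns it into the one of
   bw_strings_conv. *)
lemma gs_strings_conv:
  "(c, gs) \<in> gs_strings C n \<longleftrightarrow> c \<in> Ob C \<and> length gs = n \<and> set gs \<subseteq> Ar C \<and>
     (gs \<noteq> [] \<longrightarrow> Dom C (hd gs) = c) \<and> successively (\<lambda>g h. Dom C h = Cod C g) gs"
  by (auto simp: gs_strings_def successively_conv_nth)

lemma bw_strings_Cons:
  assumes "category C"
  shows "(d, f # fs) \<in> bw_strings C (Suc n) \<longleftrightarrow> f \<in> Ar C \<and> Cod C f = d \<and> (Dom C f, fs) \<in> bw_strings C n"
  using category_Cod_Ob[OF assms] category_Dom_Ob[OF assms]
  by (auto simp: bw_strings_conv successively_Cons)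

lemma bw_strings_snoc:
  assumes "category C"
  shows "(d, fs @ [f]) \<in> bw_strings C (Suc n) \<longleftrightarrow>
    (d, fs) \<in> bw_strings C n \<and> f \<in> Ar C \<and> Cod C f = bw_source C d fs"
  using category_Cod_Ob[OF assms] category_Dom_Ob[OF assms]
  by (auto simp: bw_strings_conv bw_source_def successively_append_iff hd_append split: if_splits)

lemma bw_source_Cons: "bw_source C d (f # fs) = bw_source C (Dom C f) fs"
  by (simp add: bw_source_def)

lemma bw_source_Ob: "category C \<Longrightarrow> (d, fs) \<in> bw_strings C n \<Longrightarrow> bw_source C d fs \<in> Ob C"
  by (auto simp: bw_source_def bw_strings_conv intro!: category_Dom_Ob subsetD[OF _ last_in_set])

lemma cmp_list_arrow:
  assumes C: "category C" and "(d, fs) \<in> bw_strings C n"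
  shows "cmp_list C d fs \<in> Ar C \<and> Cod C (cmp_list C d fs) = d \<and> Dom C (cmp_list C d fs) = bw_source C d fs"
  using assms(2)
proof (induction fs arbitrary: d n rule: induct_list012)
  case 1
  then show ?case using category_Idm[OF C, of d] by (auto simp: bw_strings_conv bw_source_def)
next
  case (2 f)
  then show ?case by (auto simp: bw_strings_conv bw_source_def)
next
  case (3 f g fs)
  have n: "n = Suc (Suc (length fs))" using "3.prems" by (simp add: bw_strings_conv)
  have f: "f \<in> Ar C" "Cod C f = d" and rest: "(Dom C f, g # fs) \<in> bw_strings C (Suc (length fs))"
    using "3.prems" unfolding n bw_strings_Cons[OF C] by auto
  show ?case
    using "3.IH"(2)[OF rest] category_Cmp[OF C, of "cmp_list C (Dom C f) (g # fs)" f] f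
    by (simp add: bw_source_Cons)
qed

definition gs_of_bw :: "('o, 'm) cat \<Rightarrow> 'o \<times> 'm list \<Rightarrow> 'o \<times> 'm list" where
  "gs_of_bw C \<tau> = (bw_source C (fst \<tau>) (snd \<tau>), rev (snd \<tau>))"

definition bw_of_gs :: "('o, 'm) cat \<Rightarrow> 'o \<times> 'm list \<Rightarrow> 'o \<times> 'm list" where
  "bw_of_gs C \<sigma> = (gs_end C \<sigma>, rev (snd \<sigma>))"

lemma gs_of_bw_in_gs_strings:
  assumes "category C" "\<tau> \<in> bw_strings C n"
  shows "gs_of_bw C \<tau> \<in> gs_strings C n"
  using assms
  by (cases \<tau>) (auto intro!: category_Dom_Ob subsetD[OF _ last_in_set]
      simp: gs_of_bw_def bw_source_def bw_strings_conv gs_strings_conv hd_rev)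

lemma bw_of_gs_in_bw_strings:
  assumes "category C" "\<sigma> \<in> gs_strings C n"
  shows "bw_of_gs C \<sigma> \<in> bw_strings C n"
  using assms
  by (cases \<sigma>) (auto intro!: category_Cod_Ob subsetD[OF _ last_in_set]
      simp: bw_of_gs_def gs_end_def bw_strings_conv gs_strings_conv hd_rev)

lemma bw_of_gs_gs_of_bw: "\<tau> \<in> bw_strings C n \<Longrightarrow> bw_of_gs C (gs_of_bw C \<tau>) = \<tau>"
  by (cases \<tau>) (auto simp: bw_of_gs_def gs_of_bw_def gs_end_def bw_source_def bw_strings_conv last_rev)

lemma gs_of_bw_bw_of_gs: "\<sigma> \<in> gs_strings C n \<Longrightarrow> gs_of_bw C (bw_of_gs C \<sigma>) = \<sigma>"
  by (cases \<sigma>) (auto simp: bw_of_gs_def gs_of_bw_def gs_end_def bw_source_def gs_strings_conv last_rev)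

lemma gs_end_gs_of_bw: "\<tau> \<in> bw_strings C n \<Longrightarrow> gs_end C (gs_of_bw C \<tau>) = fst \<tau>"
  using arg_cong[OF bw_of_gs_gs_of_bw[of \<tau> C n], of fst] by (simp add: bw_of_gs_def)

lemma bw_source_bw_of_gs:
  "\<sigma> \<in> gs_strings C n \<Longrightarrow> bw_source C (fst (bw_of_gs C \<sigma>)) (snd (bw_of_gs C \<sigma>)) = fst \<sigma>"
  using arg_cong[OF gs_of_bw_bw_of_gs[of \<sigma> C n], of fst] by (simp add: gs_of_bw_def)

lemma bw_strings_tl:
  assumes C: "category C" and "(d, fs) \<in> bw_strings C (Suc n)"
  shows "(Dom C (hd fs), tl fs) \<in> bw_strings C n \<and> hd fs \<in> Ar C \<and> Cod C (hd fs) = d \<and>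
    bw_source C (Dom C (hd fs)) (tl fs) = bw_source C d fs"
proof (cases fs)
  case Nil
  with assms(2) show ?thesis by (simp add: bw_strings_conv)
next
  case (Cons f fs')
  with assms(2) show ?thesis by (simp add: bw_strings_Cons[OF C] bw_source_Cons)
qed

lemma bw_strings_butlast:
  assumes C: "category C" and "(d, fs) \<in> bw_strings C (Suc n)"
  shows "(d, butlast fs) \<in> bw_strings C n \<and> last fs \<in> Ar C \<and>
    Cod C (last fs) = bw_source C d (butlast fs) \<and> Dom C (last fs) = bw_source C d fs"
proof -
  have "fs \<noteq> []" using assms(2) by (auto simp: bw_strings_conv)
  then have "fs = butlast fs @ [last fs]" by simp
  then show ?thesis
    using assms(2) bw_strings_snoc[OF C, of d "butlast fs" "last fs" n] \<open>fs \<noteq> []\<close>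
    by (simp add: bw_source_def)
qed

lemma bw_strings_compose_middle:
  assumes C: "category C" and "(d, xs @ f # g # ys) \<in> bw_strings C (Suc n)"
  shows "(d, xs @ Cmp C f g # ys) \<in> bw_strings C n \<and>
    bw_source C d (xs @ Cmp C f g # ys) = bw_source C d (xs @ f # g # ys)"
proof -
  have "f \<in> Ar C" "g \<in> Ar C" "Dom C f = Cod C g"
    using assms(2) by (auto simp: bw_strings_conv successively_append_iff)
  then show ?thesis
    using assms(2) category_Cmp[OF C, of g f]
    by (cases "xs = []"; cases ys) (auto simp: bw_strings_conv bw_source_def successively_append_iff hd_append)
qed

lemma bw_merge_in_bw_strings:
  assumes C: "category C" and fs: "(d, fs) \<in> bw_strings C (Suc n)" and i: "i \<in> {1..n}"
  shows "(d, bw_merge C i fs) \<in> bw_strings C n \<and> bw_source C d (bw_merge C i fs) = bw_source C d fs"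
proof -
  have len: "length fs = Suc n" using fs by (simp add: bw_strings_conv)
  have "fs ! (i - 1) # fs ! i # drop (Suc i) fs = drop (i - 1) fs"
    using i len Cons_nth_drop_Suc[of i fs] Cons_nth_drop_Suc[of "i - 1" fs]
    by (simp add: less_imp_diff_less)
  then have split: "fs = take (i - 1) fs @ fs ! (i - 1) # fs ! i # drop (Suc i) fs"
    by simp
  show ?thesis
    using bw_strings_compose_middle[OF C, of d "take (i - 1) fs" "fs ! (i - 1)" "fs ! i" "drop (Suc i) fs" n] fs
    unfolding bw_merge_def split[symmetric] by simp
qed

lemma rev_bw_merge:
  assumes "length fs = Suc n" and "i \<in> {1..n}"
  shows "rev (bw_merge C i fs) = gs_merge C (Suc n - i) (rev fs)"
  using assms by (simp add: bw_merge_def gs_merge_def take_rev drop_rev rev_nth)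

section \<open>The comparison isomorphism\<close>

fun tri :: "nat \<Rightarrow> nat" where
  "tri 0 = 0"
| "tri (Suc n) = tri n + Suc n"

definition gs_to_bw :: "('o, 'm) cat \<Rightarrow> ('o \<Rightarrow> ('k, 'a) module) \<Rightarrow> ('o \<Rightarrow> ('k, 'b) module) \<Rightarrow>
    nat \<Rightarrow> nat \<Rightarrow> ('o \<times> 'm list \<Rightarrow> 'a list \<Rightarrow> 'b) \<Rightarrow> 'o \<times> 'm list \<Rightarrow> 'a list \<Rightarrow> 'b" where
  "gs_to_bw C A M q n \<Gamma> = (\<lambda>\<tau>\<in>bw_strings C n.
     hh_comp (A (fst \<tau>)) q (mod_sign (M (bw_source C (fst \<tau>) (snd \<tau>))) (tri n)) (\<Gamma> (gs_of_bw C \<tau>)))"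

definition bw_to_gs :: "('o, 'm) cat \<Rightarrow> ('o \<Rightarrow> ('k, 'a) module) \<Rightarrow> ('o \<Rightarrow> ('k, 'b) module) \<Rightarrow>
    nat \<Rightarrow> nat \<Rightarrow> ('o \<times> 'm list \<Rightarrow> 'a list \<Rightarrow> 'b) \<Rightarrow> 'o \<times> 'm list \<Rightarrow> 'a list \<Rightarrow> 'b" where
  "bw_to_gs C A M q n \<Delta> = (\<lambda>\<sigma>\<in>gs_strings C n.
     hh_comp (A (gs_end C \<sigma>)) q (mod_sign (M (fst \<sigma>)) (tri n)) (\<Delta> (bw_of_gs C \<sigma>)))"

lemma gs_to_bw_apply:
  "\<tau> \<in> bw_strings C n \<Longrightarrow> valid_args (A (fst \<tau>)) q xs \<Longrightarrow>
   gs_to_bw C A M q n \<Gamma> \<tau> xs = mod_sign (M (bw_source C (fst \<tau>) (snd \<tau>))) (tri n) (\<Gamma> (gs_of_bw C \<tau>) xs)"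
  by (simp add: gs_to_bw_def hh_comp_def)

lemma gs_grp_carrier:
  "carrier (gs_grp K C A M q n) = (\<Pi>\<^sub>E \<sigma>\<in>gs_strings C n. HH K (A (gs_end C \<sigma>)) (M (fst \<sigma>)) q)"
  by (simp add: gs_grp_def)

locale linear_presheaf_pair =
  fixes K :: "'k ring" and C :: "('o, 'm) cat"
    and A :: "'o \<Rightarrow> ('k, 'a) module" and Af :: "'m \<Rightarrow> 'a \<Rightarrow> 'a"
    and M :: "'o \<Rightarrow> ('k, 'b) module" and Mf :: "'m \<Rightarrow> 'b \<Rightarrow> 'b"
  assumes category: "category C"
    and module_A: "c \<in> Ob C \<Longrightarrow> module K (A c)"
    and module_M: "c \<in> Ob C \<Longrightarrow> module K (M c)"
    and linear_Af: "f \<in> Ar C \<Longrightarrow> k_linear K (A (Cod C f)) (A (Dom C f)) (Af f)"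
    and linear_Mf: "f \<in> Ar C \<Longrightarrow> k_linear K (M (Cod C f)) (M (Dom C f)) (Mf f)"
begin

lemma abelian_group_M: "c \<in> Ob C \<Longrightarrow> abelian_group (M c)"
  using module_M module.axioms(2) by blast

lemma valid_args_map_Af:
  "f \<in> Ar C \<Longrightarrow> valid_args (A (Cod C f)) q xs \<Longrightarrow> valid_args (A (Dom C f)) q (map (Af f) xs)"
  using linear_Af[of f] unfolding k_linear_def valid_args_def by auto

lemma NF_HH_natsys:
  "\<tau> \<in> bw_strings C n \<Longrightarrow> NF (HH_natsys K C A Af M Mf q) (cmp_list C (fst \<tau>) (snd \<tau>)) =
     HH_grp K (A (fst \<tau>)) (M (bw_source C (fst \<tau>) (snd \<tau>))) q"
  using cmp_list_arrow[OF category, of "fst \<tau>" "snd \<tau>"] by (simp add: HH_natsys_def)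

lemma bw_grp_HH_natsys_carrier:
  "carrier (bw_grp C (HH_natsys K C A Af M Mf q) n) =
    (\<Pi>\<^sub>E \<tau>\<in>bw_strings C n. HH K (A (fst \<tau>)) (M (bw_source C (fst \<tau>) (snd \<tau>))) q)"
  unfolding bw_grp_def partial_object.simps by (intro PiE_cong) (auto simp: NF_HH_natsys HH_grp_def)

lemma gs_cochain_at_gs_of_bw:
  assumes "\<Gamma> \<in> carrier (gs_grp K C A M q n)" and \<tau>: "\<tau> \<in> bw_strings C n"
  shows "\<Gamma> (gs_of_bw C \<tau>) \<in> HH K (A (fst \<tau>)) (M (bw_source C (fst \<tau>) (snd \<tau>))) q"
  using PiE_mem[OF assms(1)[unfolded gs_grp_carrier] gs_of_bw_in_gs_strings[OF category \<tau>]]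
  unfolding gs_end_gs_of_bw[OF \<tau>] by (simp add: gs_of_bw_def)

lemma bw_cochain_at_bw_of_gs:
  assumes "\<Delta> \<in> carrier (bw_grp C (HH_natsys K C A Af M Mf q) n)" and \<sigma>: "\<sigma> \<in> gs_strings C n"
  shows "\<Delta> (bw_of_gs C \<sigma>) \<in> HH K (A (gs_end C \<sigma>)) (M (fst \<sigma>)) q"
  using PiE_mem[OF assms(1)[unfolded bw_grp_HH_natsys_carrier] bw_of_gs_in_bw_strings[OF category \<sigma>]]
  unfolding bw_source_bw_of_gs[OF \<sigma>] by (simp add: bw_of_gs_def)

lemma gs_to_bw_carrier:
  assumes "\<Gamma> \<in> carrier (gs_grp K C A M q n)"
  shows "gs_to_bw C A M q n \<Gamma> \<in> carrier (bw_grp C (HH_natsys K C A Af M Mf q) n)"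
  unfolding bw_grp_HH_natsys_carrier gs_to_bw_def restrict_PiE_iff
proof
  fix \<tau> assume \<tau>: "\<tau> \<in> bw_strings C n"
  have d: "fst \<tau> \<in> Ob C" and c: "bw_source C (fst \<tau>) (snd \<tau>) \<in> Ob C"
    using \<tau> bw_source_Ob[OF category, of "fst \<tau>" "snd \<tau>"] by (cases \<tau>, simp add: bw_strings_conv)+
  show "hh_comp (A (fst \<tau>)) q (mod_sign (M (bw_source C (fst \<tau>) (snd \<tau>))) (tri n)) (\<Gamma> (gs_of_bw C \<tau>))
      \<in> HH K (A (fst \<tau>)) (M (bw_source C (fst \<tau>) (snd \<tau>))) q"
    by (rule HH_hh_comp[OF module_A[OF d] module_M[OF c] module_M[OF c]
          k_linear_mod_sign[OF module_M[OF c]] gs_cochain_at_gs_of_bw[OF assms \<tau>]])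
qed

lemma bw_to_gs_carrier:
  assumes "\<Delta> \<in> carrier (bw_grp C (HH_natsys K C A Af M Mf q) n)"
  shows "bw_to_gs C A M q n \<Delta> \<in> carrier (gs_grp K C A M q n)"
  unfolding gs_grp_carrier bw_to_gs_def restrict_PiE_iff
proof
  fix \<sigma> assume \<sigma>: "\<sigma> \<in> gs_strings C n"
  have d: "gs_end C \<sigma> \<in> Ob C" and c: "fst \<sigma> \<in> Ob C"
    using \<sigma> bw_of_gs_in_bw_strings[OF category \<sigma>]
    by (cases \<sigma>, simp add: bw_strings_conv gs_strings_conv bw_of_gs_def)+
  show "hh_comp (A (gs_end C \<sigma>)) q (mod_sign (M (fst \<sigma>)) (tri n)) (\<Delta> (bw_of_gs C \<sigma>))
      \<in> HH K (A (gs_end C \<sigma>)) (M (fst \<sigma>)) q"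
    by (rule HH_hh_comp[OF module_A[OF d] module_M[OF c] module_M[OF c]
          k_linear_mod_sign[OF module_M[OF c]] bw_cochain_at_bw_of_gs[OF assms \<sigma>]])
qed

lemma bw_to_gs_gs_to_bw:
  assumes \<Gamma>: "\<Gamma> \<in> carrier (gs_grp K C A M q n)"
  shows "bw_to_gs C A M q n (gs_to_bw C A M q n \<Gamma>) = \<Gamma>"
proof
  fix \<sigma>
  show "bw_to_gs C A M q n (gs_to_bw C A M q n \<Gamma>) \<sigma> = \<Gamma> \<sigma>"
  proof (cases "\<sigma> \<in> gs_strings C n")
    case False
    then show ?thesis by (simp add: bw_to_gs_def PiE_arb[OF \<Gamma>[unfolded gs_grp_carrier]])
  next
    case True
    have \<Gamma>\<sigma>: "\<Gamma> \<sigma> \<in> HH K (A (gs_end C \<sigma>)) (M (fst \<sigma>)) q"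
      using PiE_mem[OF \<Gamma>[unfolded gs_grp_carrier] True] .
    have "abelian_group (M (fst \<sigma>))"
      using True by (intro abelian_group_M) (cases \<sigma>, simp add: gs_strings_conv)
    then have "hh_comp (A (gs_end C \<sigma>)) q (\<lambda>x. mod_sign (M (fst \<sigma>)) (tri n) (mod_sign (M (fst \<sigma>)) (tri n) x))
        (\<Gamma> \<sigma>) = \<Gamma> \<sigma>"
      by (intro hh_comp_id[OF \<Gamma>\<sigma>] mod_sign_twice)
    then show ?thesis
      using True bw_of_gs_in_bw_strings[OF category True] gs_of_bw_bw_of_gs[OF True] bw_source_bw_of_gs[OF True]
      by (simp add: bw_to_gs_def gs_to_bw_def hh_comp_hh_comp bw_of_gs_def)
  qed
qed

lemma gs_to_bw_bw_to_gs:
  assumes \<Delta>: "\<Delta> \<in> carrier (bw_grp C (HH_natsys K C A Af M Mf q) n)"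
  shows "gs_to_bw C A M q n (bw_to_gs C A M q n \<Delta>) = \<Delta>"
proof
  fix \<tau>
  show "gs_to_bw C A M q n (bw_to_gs C A M q n \<Delta>) \<tau> = \<Delta> \<tau>"
  proof (cases "\<tau> \<in> bw_strings C n")
    case False
    then show ?thesis by (simp add: gs_to_bw_def PiE_arb[OF \<Delta>[unfolded bw_grp_HH_natsys_carrier]])
  next
    case True
    let ?N = "M (bw_source C (fst \<tau>) (snd \<tau>))"
    have \<Delta>\<tau>: "\<Delta> \<tau> \<in> HH K (A (fst \<tau>)) ?N q"
      using PiE_mem[OF \<Delta>[unfolded bw_grp_HH_natsys_carrier] True] .
    have "abelian_group ?N"
      using True bw_source_Ob[OF category, of "fst \<tau>" "snd \<tau>"] by (intro abelian_group_M) simp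
    then have "hh_comp (A (fst \<tau>)) q (\<lambda>x. mod_sign ?N (tri n) (mod_sign ?N (tri n) x)) (\<Delta> \<tau>) = \<Delta> \<tau>"
      by (intro hh_comp_id[OF \<Delta>\<tau>] mod_sign_twice)
    then show ?thesis
      using True gs_of_bw_in_gs_strings[OF category True] bw_of_gs_gs_of_bw[OF True] gs_end_gs_of_bw[OF True]
      by (simp add: bw_to_gs_def gs_to_bw_def hh_comp_hh_comp gs_of_bw_def)
  qed
qed

lemma gs_to_bw_mult:
  assumes \<Gamma>: "\<Gamma> \<in> carrier (gs_grp K C A M q n)" and \<Gamma>': "\<Gamma>' \<in> carrier (gs_grp K C A M q n)"
  shows "gs_to_bw C A M q n (\<Gamma> \<otimes>\<^bsub>gs_grp K C A M q n\<^esub> \<Gamma>') =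
    gs_to_bw C A M q n \<Gamma> \<otimes>\<^bsub>bw_grp C (HH_natsys K C A Af M Mf q) n\<^esub> gs_to_bw C A M q n \<Gamma>'"
proof (intro ext)
  fix \<tau> xs
  show "gs_to_bw C A M q n (\<Gamma> \<otimes>\<^bsub>gs_grp K C A M q n\<^esub> \<Gamma>') \<tau> xs =
    (gs_to_bw C A M q n \<Gamma> \<otimes>\<^bsub>bw_grp C (HH_natsys K C A Af M Mf q) n\<^esub> gs_to_bw C A M q n \<Gamma>') \<tau> xs"
  proof (cases "\<tau> \<in> bw_strings C n \<and> valid_args (A (fst \<tau>)) q xs")
    case False
    then show ?thesis by (auto simp: gs_to_bw_def bw_grp_def NF_HH_natsys HH_grp_def hh_comp_def)
  next
    case True
    then have \<tau>: "\<tau> \<in> bw_strings C n" and xs: "valid_args (A (fst \<tau>)) q xs" by auto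
    let ?N = "M (bw_source C (fst \<tau>) (snd \<tau>))"
    have "abelian_group ?N"
      using \<tau> bw_source_Ob[OF category, of "fst \<tau>" "snd \<tau>"] by (intro abelian_group_M) simp
    moreover have "\<Gamma> (gs_of_bw C \<tau>) xs \<in> carrier ?N" "\<Gamma>' (gs_of_bw C \<tau>) xs \<in> carrier ?N"
      using gs_cochain_at_gs_of_bw[OF \<Gamma> \<tau>] gs_cochain_at_gs_of_bw[OF \<Gamma>' \<tau>] xs by (auto intro: HH_closed)
    ultimately show ?thesis
      using \<tau> xs gs_of_bw_in_gs_strings[OF category \<tau>] gs_end_gs_of_bw[OF \<tau>]
      by (simp add: gs_to_bw_apply bw_grp_def NF_HH_natsys HH_grp_def gs_grp_def mod_sign_add gs_of_bw_def)
  qed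
qed

lemma gs_to_bw_iso:
  "gs_to_bw C A M q n \<in> iso (gs_grp K C A M q n) (bw_grp C (HH_natsys K C A Af M Mf q) n)"
proof -
  have "gs_to_bw C A M q n \<in> hom (gs_grp K C A M q n) (bw_grp C (HH_natsys K C A Af M Mf q) n)"
    using gs_to_bw_carrier gs_to_bw_mult by (auto simp: hom_def)
  moreover have "bij_betw (gs_to_bw C A M q n) (carrier (gs_grp K C A M q n))
      (carrier (bw_grp C (HH_natsys K C A Af M Mf q) n))"
    by (rule bij_betw_byWitness[where f' = "bw_to_gs C A M q n"])
      (auto simp: bw_to_gs_gs_to_bw gs_to_bw_bw_to_gs gs_to_bw_carrier bw_to_gs_carrier)
  ultimately show ?thesis by (simp add: iso_def)
qed

lemma bw_diff_HH_natsys_apply: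
  assumes \<Delta>: "\<Delta> \<in> carrier (bw_grp C (HH_natsys K C A Af M Mf q) n)"
    and fs: "(d, fs) \<in> bw_strings C (Suc n)" and c: "bw_source C d fs = c"
    and xs: "valid_args (A d) q xs"
  shows "bw_diff C (HH_natsys K C A Af M Mf q) n \<Delta> (d, fs) xs =
    (\<Delta> (Dom C (hd fs), tl fs) (map (Af (hd fs)) xs)
      \<oplus>\<^bsub>M c\<^esub> (\<Oplus>\<^bsub>M c\<^esub>i\<in>{1..n}. mod_sign (M c) i (\<Delta> (d, bw_merge C i fs) xs)))
    \<oplus>\<^bsub>M c\<^esub> mod_sign (M c) (Suc n) (Mf (last fs) (\<Delta> (d, butlast fs) xs))"
proof -
  let ?H = "HH_grp K (A d) (M c) q"
  have Ob: "d \<in> Ob C" "c \<in> Ob C"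
    using fs c bw_source_Ob[OF category fs] by (auto simp: bw_strings_conv)
  have B: "module K (A d)" and N: "module K (M c)" using module_A module_M Ob by auto
  have \<Delta>_at: "\<Delta> \<tau> \<in> HH K (A (fst \<tau>)) (M (bw_source C (fst \<tau>) (snd \<tau>))) q" if "\<tau> \<in> bw_strings C n" for \<tau>
    using PiE_mem[OF \<Delta>[unfolded bw_grp_HH_natsys_carrier] that] .
  note hd = bw_strings_tl[OF category fs] and last = bw_strings_butlast[OF category fs]
  have merge_HH: "\<Delta> (d, bw_merge C i fs) \<in> HH K (A d) (M c) q" if "i \<in> {1..n}" for i
    using \<Delta>_at bw_merge_in_bw_strings[OF category fs that] c by fastforce
  have sum: "finprod ?H (\<lambda>i. grp_sign ?H i (\<Delta> (d, bw_merge C i fs))) {1..n} xs =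
      (\<Oplus>\<^bsub>M c\<^esub>i\<in>{1..n}. mod_sign (M c) i (\<Delta> (d, bw_merge C i fs) xs))"
    by (rule HH_grp_finprod_sign_apply[OF B N finite_atLeastAtMost merge_HH xs])
  have last_Ob: "Cod C (last fs) \<in> Ob C" using category_Cod_Ob[OF category] last by blast
  have "\<Delta> (d, butlast fs) \<in> HH K (A d) (M (Cod C (last fs))) q"
    using \<Delta>_at[of "(d, butlast fs)"] last by simp
  moreover have "k_linear K (M (Cod C (last fs))) (M c) (Mf (last fs))"
    using linear_Mf[of "last fs"] last c by simp
  ultimately have upper_HH: "hh_comp (A d) q (Mf (last fs)) (\<Delta> (d, butlast fs)) \<in> HH K (A d) (M c) q"
    using HH_hh_comp[OF B module_M[OF last_Ob] N] by blast
  have NF: "NF (HH_natsys K C A Af M Mf q) (cmp_list C d fs) = ?H"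
    using NF_HH_natsys[OF fs] c by simp
  have lower: "lower (HH_natsys K C A Af M Mf q) (hd fs) (cmp_list C (Dom C (hd fs)) (tl fs))
      (\<Delta> (Dom C (hd fs), tl fs)) xs = \<Delta> (Dom C (hd fs), tl fs) (map (Af (hd fs)) xs)"
    using hd xs by (simp add: HH_natsys_def)
  have upper: "upper (HH_natsys K C A Af M Mf q) (last fs) (cmp_list C d (butlast fs)) (\<Delta> (d, butlast fs)) =
      hh_comp (A d) q (Mf (last fs)) (\<Delta> (d, butlast fs))"
    using cmp_list_arrow[OF category, of d "butlast fs" n] last by (simp add: HH_natsys_def hh_comp_def)
  show ?thesis
    using fs xs sum
    by (simp add: bw_diff_def Let_def NF HH_grp_mult lower upper HH_grp_sign[OF B N upper_HH])
      (simp add: hh_comp_def)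
qed

lemma gs_cochain_faces_closed:
  assumes \<Gamma>: "\<Gamma> \<in> carrier (gs_grp K C A M q n)"
    and fs: "(d, fs) \<in> bw_strings C (Suc n)" and c: "bw_source C d fs = c"
    and xs: "valid_args (A d) q xs"
  shows "\<Gamma> (gs_of_bw C (d, butlast fs)) xs \<in> carrier (M (Cod C (last fs)))"
    and "\<Gamma> (gs_of_bw C (Dom C (hd fs), tl fs)) (map (Af (hd fs)) xs) \<in> carrier (M c)"
    and "i \<in> {1..n} \<Longrightarrow> \<Gamma> (gs_of_bw C (d, bw_merge C i fs)) xs \<in> carrier (M c)"
proof -
  note hd = bw_strings_tl[OF category fs] and last = bw_strings_butlast[OF category fs]
  show "\<Gamma> (gs_of_bw C (d, butlast fs)) xs \<in> carrier (M (Cod C (last fs)))"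
    using gs_cochain_at_gs_of_bw[OF \<Gamma>] last xs by (fastforce intro: HH_closed)
  have "valid_args (A (Dom C (hd fs))) q (map (Af (hd fs)) xs)"
    using valid_args_map_Af hd xs by metis
  then show "\<Gamma> (gs_of_bw C (Dom C (hd fs), tl fs)) (map (Af (hd fs)) xs) \<in> carrier (M c)"
    using gs_cochain_at_gs_of_bw[OF \<Gamma>, of "(Dom C (hd fs), tl fs)"] hd c by (simp add: HH_closed)
  show "\<Gamma> (gs_of_bw C (d, bw_merge C i fs)) xs \<in> carrier (M c)" if "i \<in> {1..n}"
    using gs_cochain_at_gs_of_bw[OF \<Gamma>] bw_merge_in_bw_strings[OF category fs that] c xs
    by (fastforce intro: HH_closed)
qed

lemma gs_diff_at_gs_of_bw:
  assumes \<Gamma>: "\<Gamma> \<in> carrier (gs_grp K C A M q n)"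
    and fs: "(d, fs) \<in> bw_strings C (Suc n)" and c: "bw_source C d fs = c"
    and xs: "valid_args (A d) q xs"
  shows "gs_diff K C A Af M Mf q n \<Gamma> (c, rev fs) xs =
    (Mf (last fs) (\<Gamma> (gs_of_bw C (d, butlast fs)) xs)
      \<oplus>\<^bsub>M c\<^esub> (\<Oplus>\<^bsub>M c\<^esub>r\<in>{1..n}. mod_sign (M c) r (\<Gamma> (gs_of_bw C (d, bw_merge C (Suc n - r) fs)) xs)))
    \<oplus>\<^bsub>M c\<^esub> mod_sign (M c) (Suc n) (\<Gamma> (gs_of_bw C (Dom C (hd fs), tl fs)) (map (Af (hd fs)) xs))"
proof -
  have \<sigma>: "gs_of_bw C (d, fs) = (c, rev fs)" using c by (simp add: gs_of_bw_def)
  have \<sigma>_in: "(c, rev fs) \<in> gs_strings C (Suc n)" and \<sigma>_end: "gs_end C (c, rev fs) = d"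
    using gs_of_bw_in_gs_strings[OF category fs] gs_end_gs_of_bw[OF fs] unfolding \<sigma> by simp_all
  note hd = bw_strings_tl[OF category fs] and last = bw_strings_butlast[OF category fs]
  have len: "length fs = Suc n" using fs by (simp add: bw_strings_conv)
  have "abelian_group (M c)"
    using abelian_group_M bw_source_Ob[OF category fs] c by blast
  then interpret N: abelian_group "M c" .
  have "(c, gs_merge C r (rev fs)) = gs_of_bw C (d, bw_merge C (Suc n - r) fs)" if r: "r \<in> {1..n}" for r
  proof -
    have i: "Suc n - r \<in> {1..n}" using r by auto
    then show ?thesis
      using rev_bw_merge[OF len i, of C] bw_merge_in_bw_strings[OF category fs i] r c
      by (simp add: gs_of_bw_def)
  qed
  moreover have "\<Gamma> (gs_of_bw C (d, bw_merge C (Suc n - r) fs)) xs \<in> carrier (M c)" if "r \<in> {1..n}" for r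
  proof -
    have "Suc n - r \<in> {1..n}" using that by auto
    then show ?thesis by (rule gs_cochain_faces_closed(3)[OF \<Gamma> fs c xs])
  qed
  ultimately have sum: "(\<Oplus>\<^bsub>M c\<^esub>r\<in>{1..n}. mod_sign (M c) r (\<Gamma> (c, gs_merge C r (rev fs)) xs)) =
      (\<Oplus>\<^bsub>M c\<^esub>r\<in>{1..n}. mod_sign (M c) r (\<Gamma> (gs_of_bw C (d, bw_merge C (Suc n - r) fs)) xs))"
    by (intro N.finsum_cong' refl) (auto intro!: mod_sign_closed[OF N.abelian_group_axioms])
  have "(Cod C (hd (rev fs)), tl (rev fs)) = gs_of_bw C (d, butlast fs)"
    and "(c, butlast (rev fs)) = gs_of_bw C (Dom C (hd fs), tl fs)"
    using hd last len c butlast_rev[of "rev fs"] by (auto simp: gs_of_bw_def hd_rev)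
  then show ?thesis
    using \<sigma>_in \<sigma>_end xs len sum by (simp add: gs_diff_def Let_def hd_rev last_rev)
qed

lemma bw_diff_gs_to_bw_apply:
  assumes \<Gamma>: "\<Gamma> \<in> carrier (gs_grp K C A M q n)"
    and fs: "(d, fs) \<in> bw_strings C (Suc n)" and c: "bw_source C d fs = c"
    and xs: "valid_args (A d) q xs"
  shows "bw_diff C (HH_natsys K C A Af M Mf q) n (gs_to_bw C A M q n \<Gamma>) (d, fs) xs =
    (mod_sign (M c) (tri n) (\<Gamma> (gs_of_bw C (Dom C (hd fs), tl fs)) (map (Af (hd fs)) xs))
      \<oplus>\<^bsub>M c\<^esub> (\<Oplus>\<^bsub>M c\<^esub>i\<in>{1..n}. mod_sign (M c) i (mod_sign (M c) (tri n) (\<Gamma> (gs_of_bw C (d, bw_merge C i fs)) xs))))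
    \<oplus>\<^bsub>M c\<^esub> mod_sign (M c) (Suc n) (mod_sign (M c) (tri n) (Mf (last fs) (\<Gamma> (gs_of_bw C (d, butlast fs)) xs)))"
proof -
  note hd = bw_strings_tl[OF category fs] and last = bw_strings_butlast[OF category fs]
  note closed = gs_cochain_faces_closed[OF \<Gamma> fs c xs]
  have c_Ob: "c \<in> Ob C" using bw_source_Ob[OF category fs] c by simp
  have last_Ob: "Cod C (last fs) \<in> Ob C" using category_Cod_Ob[OF category] last by blast
  have "abelian_group (M c)" using abelian_group_M[OF c_Ob] .
  then interpret N: abelian_group "M c" .
  have "(\<Oplus>\<^bsub>M c\<^esub>i\<in>{1..n}. mod_sign (M c) i (gs_to_bw C A M q n \<Gamma> (d, bw_merge C i fs) xs)) =
      (\<Oplus>\<^bsub>M c\<^esub>i\<in>{1..n}. mod_sign (M c) i (mod_sign (M c) (tri n) (\<Gamma> (gs_of_bw C (d, bw_merge C i fs)) xs)))"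
    using bw_merge_in_bw_strings[OF category fs] xs closed(3)
    by (intro N.finsum_cong' refl) (auto simp: gs_to_bw_apply c intro!: mod_sign_closed[OF N.abelian_group_axioms])
  moreover have "Mf (last fs) (gs_to_bw C A M q n \<Gamma> (d, butlast fs) xs) =
      mod_sign (M c) (tri n) (Mf (last fs) (\<Gamma> (gs_of_bw C (d, butlast fs)) xs))"
    using last xs c linear_Mf[of "last fs"]
      k_linear_mod_sign_commute[OF module_M[OF last_Ob] module_M[OF c_Ob] _ closed(1)]
    by (simp add: gs_to_bw_apply)
  moreover have "gs_to_bw C A M q n \<Gamma> (Dom C (hd fs), tl fs) (map (Af (hd fs)) xs) =
      mod_sign (M c) (tri n) (\<Gamma> (gs_of_bw C (Dom C (hd fs), tl fs)) (map (Af (hd fs)) xs))"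
    using hd xs c valid_args_map_Af[of "hd fs"] by (simp add: gs_to_bw_apply)
  ultimately show ?thesis
    using bw_diff_HH_natsys_apply[OF gs_to_bw_carrier[OF \<Gamma>] fs c xs] by simp
qed

lemma gs_to_bw_gs_diff:
  assumes \<Gamma>: "\<Gamma> \<in> carrier (gs_grp K C A M q n)"
  shows "gs_to_bw C A M q (Suc n) (gs_diff K C A Af M Mf q n \<Gamma>) =
    bw_diff C (HH_natsys K C A Af M Mf q) n (gs_to_bw C A M q n \<Gamma>)"
proof (intro ext)
  fix \<tau> xs
  show "gs_to_bw C A M q (Suc n) (gs_diff K C A Af M Mf q n \<Gamma>) \<tau> xs =
    bw_diff C (HH_natsys K C A Af M Mf q) n (gs_to_bw C A M q n \<Gamma>) \<tau> xs"
  proof (cases "\<tau> \<in> bw_strings C (Suc n) \<and> valid_args (A (fst \<tau>)) q xs")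
    case False
    then show ?thesis
      by (auto simp: gs_to_bw_def hh_comp_def bw_diff_def Let_def NF_HH_natsys HH_grp_mult)
  next
    case True
    then obtain d fs where \<tau>: "\<tau> = (d, fs)" and fs: "(d, fs) \<in> bw_strings C (Suc n)"
      and xs: "valid_args (A d) q xs"
      by (cases \<tau>) auto
    define c where "c = bw_source C d fs"
    then have c: "bw_source C d fs = c" by simp
    note last = bw_strings_butlast[OF category fs]
    note closed = gs_cochain_faces_closed[OF \<Gamma> fs c xs]
    have N: "abelian_group (M c)" using abelian_group_M bw_source_Ob[OF category fs] c by blast
    have x: "Mf (last fs) (\<Gamma> (gs_of_bw C (d, butlast fs)) xs) \<in> carrier (M c)"
      using linear_Mf[of "last fs"] last c closed(1) by (auto simp: k_linear_def)
    have "gs_to_bw C A M q (Suc n) (gs_diff K C A Af M Mf q n \<Gamma>) (d, fs) xs =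
        mod_sign (M c) (tri n + Suc n) (gs_diff K C A Af M Mf q n \<Gamma> (c, rev fs) xs)"
      using fs xs by (simp add: gs_to_bw_apply gs_of_bw_def c)
    also have "\<dots> = bw_diff C (HH_natsys K C A Af M Mf q) n (gs_to_bw C A M q n \<Gamma>) (d, fs) xs"
      unfolding gs_diff_at_gs_of_bw[OF \<Gamma> fs c xs] bw_diff_gs_to_bw_apply[OF \<Gamma> fs c xs]
      by (rule mod_sign_reversed_coboundary[OF N x closed(2) closed(3)])
    finally show ?thesis unfolding \<tau> .
  qed
qed

theorem cochain_iso_gs_to_bw:
  "cochain_iso (gs_grp K C A M q) (gs_diff K C A Af M Mf q)
     (bw_grp C (HH_natsys K C A Af M Mf q)) (bw_diff C (HH_natsys K C A Af M Mf q)) (gs_to_bw C A M q)"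
  unfolding cochain_iso_def using gs_to_bw_iso gs_to_bw_gs_diff by blast

end

lemma linear_presheaf_pairI:
  assumes "category C" and "presheaf_alg K C A Af" and "presheaf_bimod K C A Af M Ml Mr Mf"
  shows "linear_presheaf_pair K C A Af M Mf"
proof (rule linear_presheaf_pair.intro)
  show "category C" by fact
next
  fix c assume "c \<in> Ob C"
  with assms(2) show "module K (A c)" unfolding presheaf_alg_def k_algebra_def by blast
next
  fix c assume "c \<in> Ob C"
  with assms(3) show "module K (M c)" unfolding presheaf_bimod_def bimodule_def by blast
next
  fix f assume "f \<in> Ar C"
  with assms(2) show "k_linear K (A (Cod C f)) (A (Dom C f)) (Af f)"
    unfolding presheaf_alg_def k_alg_hom_def by blast
next
  fix f assume "f \<in> Ar C"
  with assms(3) show "k_linear K (M (Cod C f)) (M (Dom C f)) (Mf f)"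
    unfolding presheaf_bimod_def by blast
qed

theorem proposition3p8:
  fixes K :: "'k ring"
    and C :: "('o, 'm) cat"
    and A :: "'o \<Rightarrow> ('k, 'a) module" and Af :: "'m \<Rightarrow> 'a \<Rightarrow> 'a"
    and M :: "'o \<Rightarrow> ('k, 'b) module" and Ml :: "'o \<Rightarrow> 'a \<Rightarrow> 'b \<Rightarrow> 'b"
    and Mr :: "'o \<Rightarrow> 'b \<Rightarrow> 'a \<Rightarrow> 'b" and Mf :: "'m \<Rightarrow> 'b \<Rightarrow> 'b"
  assumes "field K"
    and "finite_category C"
    and "presheaf_alg K C A Af"
    and "presheaf_bimod K C A Af M Ml Mr Mf"
  shows "\<forall>q::nat. complexes_isomorphic
           (gs_grp K C A M q) (gs_diff K C A Af M Mf q)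
           (bw_grp C (HH_natsys K C A Af M Mf q)) (bw_diff C (HH_natsys K C A Af M Mf q))"
proof
  fix q :: nat
  have "linear_presheaf_pair K C A Af M Mf"
    using assms(2-4) by (intro linear_presheaf_pairI) (simp_all add: finite_category_def)
  then show "complexes_isomorphic (gs_grp K C A M q) (gs_diff K C A Af M Mf q)
      (bw_grp C (HH_natsys K C A Af M Mf q)) (bw_diff C (HH_natsys K C A Af M Mf q))"
    unfolding complexes_isomorphic_def by (blast intro: linear_presheaf_pair.cochain_iso_gs_to_bw)
qed

end
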